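(* Define $\tau:\mathrm{Cu}_2\setminus\{\lozenge\}\to\mathbb C$ by $\tau(w)=1$ if $w=s_{\mathbf i1}s_{\mathbf i}^*$ for some $\mathbf i\in\mathbf I$, and $\tau(w)=0$ otherwise, and regard it as the bounded linear functional $f\mapsto\sum_{w}f(w)\tau(w)$ on $\mathcal A$. Then $\tau$ is a non-zero bounded trace on $\mathcal A$ with $\tau(\delta_e)=0$; consequently $\tau$ vanishes on $\mathcal J$ and induces a non-zero bounded trace on $\mathcal A/\mathcal J$.
   Context: Let $\mathrm{Cu}_2$ be the involutive monoid with identity $e$ and zero element $\lozenge$ (so $\lozenge t=\lozenge=t\lozenge$ for all $t$), generated by $s_1,s_2,s_1^*,s_2^*$ subject to $s_1^*s_1=e=s_2^*s_2$ and $s_1^*s_2=\lozenge=s_2^*s_1$, with involution $t\mapsto t^*$ satisfying $(t^* )^*=t$, $(tu)^*=u^*t^*$. Let $\mathbf I_0=\{\emptyset\}$, $\mathbf I_n=\{1,2\}^n$, $\mathbf I=\bigcup_{n\ge0}\mathbf I_n$ (finite words; $\mathbf i1$ denotes the word $\mathbf i$ followed by the letter $1$). For $\mathbf i=(i_1,\dots,i_k)\in\mathbf I$ put $s_{\mathbf i}=s_{i_1}\cdots s_{i_k}$ ($s_\emptyset=e$) and $s_{\mathbf i}^*=(s_{\mathbf i})^*$. Let $\mathcal A=\ell^1(\mathrm{Cu}_2\setminus\{\lozenge\})$ with product $\#$ determined by bilinearity and continuity from $\delta_s\#\delta_t=\delta_{st}$ if $st\neq\lozenge$ and $\delta_s\#\delta_t=0$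 if $st=\lozenge$; this is a unital Banach algebra with unit $\delta_e$. Let $f_0=\delta_e-\delta_{s_1s_1^*}-\delta_{s_2s_2^*}$ and let $\mathcal J$ be the closed two-sided ideal of $\mathcal A$ generated by $f_0$. A trace on a Banach algebra $\mathcal B$ is a linear functional $\tau$ with $\tau(ab)=\tau(ba)$ for all $a,b\in\mathcal B$. *)

theory Defs
  imports "HOL-Analysis.Analysis" "HOL-Library.Sublist" "HOL-Library.Function_Algebras"
begin

datatype gen = G1 | G2

type_synonym word = "gen list"

text \<open>Every non-zero element of Cu_2 is uniquely of the form s_a s_b^* with a, b words.
  We model Cu_2 minus the zero element by pairs (a,b) standing for s_a s_b^*,
  and the monoid product by an option-valued map, None representing the zero element.\<close>

type_synonym cu = "word \<times> word"

definition cu_mult :: "cu \<Rightarrow> cu \<Rightarrow> cu option" where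
  "cu_mult x y = (case x of (a,b) \<Rightarrow> case y of (c,d) \<Rightarrow>
     if prefix b c then Some (a @ drop (length b) c, d)
     else if prefix c b then Some (a, d @ drop (length c) b)
     else None)"

definition cu_e :: cu where "cu_e = ([], [])"

definition cu_s :: "gen \<Rightarrow> cu" where "cu_s i = ([i], [])"

definition cu_star :: "cu \<Rightarrow> cu" where "cu_star x = (snd x, fst x)"

definition l1 :: "(cu \<Rightarrow> complex) set" where
  "l1 = {f. (\<lambda>w. norm (f w)) summable_on UNIV}"

definition l1norm :: "(cu \<Rightarrow> complex) \<Rightarrow> real" where
  "l1norm f = (\<Sum>\<^sub>\<infinity>w. norm (f w))"

definition conv :: "(cu \<Rightarrow> complex) \<Rightarrow> (cu \<Rightarrow> complex) \<Rightarrow> (cu \<Rightarrow> complex)" (infixl "#" 70) where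
  "(f # g) w = (\<Sum>\<^sub>\<infinity>(u,v)\<in>{(u,v). cu_mult u v = Some w}. f u * g v)"

definition delta :: "cu \<Rightarrow> cu \<Rightarrow> complex" where
  "delta s = (\<lambda>w. if w = s then 1 else 0)"

definition f0 :: "cu \<Rightarrow> complex" where
  "f0 = delta cu_e - delta ([G1],[G1]) - delta ([G2],[G2])"

definition closed_ideal :: "(cu \<Rightarrow> complex) set \<Rightarrow> bool" where
  "closed_ideal S \<longleftrightarrow> S \<subseteq> l1 \<and> 0 \<in> S
     \<and> (\<forall>x\<in>S. \<forall>y\<in>S. x + y \<in> S)
     \<and> (\<forall>c::complex. \<forall>x\<in>S. (\<lambda>w. c * x w) \<in> S)
     \<and> (\<forall>a\<in>l1. \<forall>x\<in>S. a # x \<in> S \<and> x # a \<in> S)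
     \<and> (\<forall>F f. (\<forall>n. F n \<in> S) \<and> f \<in> l1 \<and> (\<lambda>n. l1norm (F n - f)) \<longlonglongrightarrow> 0 \<longrightarrow> f \<in> S)"

definition J :: "(cu \<Rightarrow> complex) set" where
  "J = \<Inter>{S. closed_ideal S \<and> f0 \<in> S}"

definition tau_w :: "cu \<Rightarrow> complex" where
  "tau_w w = (if \<exists>i. w = (i @ [G1], i) then 1 else 0)"

definition tau :: "(cu \<Rightarrow> complex) \<Rightarrow> complex" where
  "tau f = (\<Sum>\<^sub>\<infinity>w. f w * tau_w w)"

end

theory Submission
  imports Defs
begin

text \<open>
  Write \<open>(a, b)\<close> for \<open>s_a s_b^*\<close>; then \<open>tau_w\<close> is the indicator of the pairs \<open>(i @ [G1], i)\<close>.
  On the monoid this indicator is a class function, \<open>tau (x y) = tau (y x)\<close>, as a case analysis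
  on the prefix relation between the inner words shows; summing it against \<open>f u * g v\<close> gives the
  trace property.

  For the ideal, consider the functionals \<open>f \<mapsto> tau (delta r # f)\<close> for \<open>r\<close> in \<open>Cu_2\<close>. Each is
  bounded by the \<open>l\<^sup>1\<close> norm and annihilates \<open>f0\<close>, because \<open>tau r = tau (r p\<^sub>1) + tau (r p\<^sub>2)\<close>
  with \<open>p\<^sub>i = s\<^sub>i s\<^sub>i\<^sup>*\<close>. Their common kernel is a closed two-sided ideal: multiplying \<open>f\<close> by
  \<open>delta u\<close> on the left replaces \<open>r\<close> by \<open>r u\<close>, and, thanks to the class-function property,
  multiplying by \<open>delta v\<close> on the right replaces \<open>r\<close> by \<open>v r\<close>. So this kernel contains \<open>J\<close>, and
  \<open>tau\<close>, the functional for \<open>r = e\<close>, vanishes on \<open>J\<close>.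
\<close>

lemma cu_mult_append_left: "cu_mult (a, b) (b @ z, d) = Some (a @ z, d)"
  by (simp add: cu_mult_def)

lemma cu_mult_append_right: "cu_mult (a, c @ z) (c, d) = Some (a, d @ z)"
  by (auto simp: cu_mult_def prefix_def)

lemma cu_mult_incomparable: "\<not> prefix b c \<Longrightarrow> \<not> prefix c b \<Longrightarrow> cu_mult (a, b) (c, d) = None"
  by (simp add: cu_mult_def)

lemma cu_mult_cases:
  obtains z where "c = b @ z" "cu_mult (a, b) (c, d) = Some (a @ z, d)"
  | z where "b = c @ z" "cu_mult (a, b) (c, d) = Some (a, d @ z)"
  | "\<not> prefix b c" "\<not> prefix c b" "cu_mult (a, b) (c, d) = None"
  by (metis cu_mult_append_left cu_mult_append_right cu_mult_incomparable prefix_def)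

lemma cu_mult_incomparable_append:
  assumes "\<not> prefix b c" "\<not> prefix c b"
  shows "cu_mult (a, b) (c @ v, d) = None"
proof (rule cu_mult_incomparable)
  show "\<not> prefix b (c @ v)"
    using assms prefix_same_cases[of b "c @ v" c] by auto
  show "\<not> prefix (c @ v) b"
    using assms prefix_order.trans[of c "c @ v"] by auto
qed

lemma cu_mult_e_left [simp]: "cu_mult cu_e v = Some v"
  by (cases v) (simp add: cu_mult_def cu_e_def)

lemma cu_mult_e_right [simp]: "cu_mult v cu_e = Some v"
  by (cases v) (simp add: cu_mult_def cu_e_def)

fun cu_times :: "cu option \<Rightarrow> cu option \<Rightarrow> cu option" (infixl "\<cdot>" 70) where
  "Some x \<cdot> Some y = cu_mult x y"
| "_ \<cdot> _ = None"

lemma cu_times_None_right [simp]: "x \<cdot> None = None"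
  by (cases x) auto

lemma cu_times_assoc_pairs:
  "(Some (a, b) \<cdot> Some (c, d)) \<cdot> Some (e, f) = Some (a, b) \<cdot> (Some (c, d) \<cdot> Some (e, f))"
proof (cases rule: cu_mult_cases[of c b a d])
  case (1 u)
  then show ?thesis
    by (cases rule: cu_mult_cases[of e d "a @ u" f]) (auto simp: cu_mult_def)
next
  case (2 u)
  then show ?thesis
    by (cases rule: cu_mult_cases[of e d c f]) (auto simp: cu_mult_def prefix_def append_eq_append_conv2)
next
  case 3
  then show ?thesis
    by (cases rule: cu_mult_cases[of e d c f])
      (simp_all add: cu_mult_incomparable cu_mult_incomparable_append)
qed

lemma cu_times_assoc: "(x \<cdot> y) \<cdot> z = x \<cdot> (y \<cdot> z)"
proof (cases x; cases y; cases z)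
  fix p q r
  assume "x = Some p" "y = Some q" "z = Some r"
  then show ?thesis
    using cu_times_assoc_pairs[of "fst p" "snd p" "fst q" "snd q" "fst r" "snd r"] by simp
qed auto

fun tau_opt :: "cu option \<Rightarrow> complex" where
  "tau_opt None = 0"
| "tau_opt (Some w) = tau_w w"

lemma tau_w_pair: "tau_w (a, b) = (if a = b @ [G1] then 1 else 0)"
  by (auto simp: tau_w_def)

lemma tau_opt_cases: "tau_opt x = 0 \<or> tau_opt x = 1"
  by (cases x) (auto simp: tau_w_def)

lemma norm_tau_opt_le: "norm (tau_opt x) \<le> 1"
  using tau_opt_cases[of x] by auto

lemma tau_opt_eq_1_commute_pairs:
  assumes "tau_opt (cu_mult (a, b) (c, d)) = 1"
  shows "tau_opt (cu_mult (c, d) (a, b)) = 1"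
proof (cases rule: cu_mult_cases[of c b a d])
  case (1 z)
  with assms have a_z: "a @ z = d @ [G1]"
    by (simp add: tau_w_pair split: if_splits)
  show ?thesis
  proof (cases z rule: rev_cases)
    case Nil
    with 1 a_z show ?thesis
      using cu_mult_append_left[of c d "[G1]" b] by (simp add: tau_w_pair)
  next
    case (snoc z' g)
    with 1 a_z show ?thesis
      using cu_mult_append_right[of c a z' b] by (simp add: tau_w_pair)
  qed
next
  case (2 z)
  with assms have "a = d @ z @ [G1]"
    by (simp add: tau_w_pair split: if_splits)
  with 2 show ?thesis
    using cu_mult_append_left[of c d "z @ [G1]" b] by (simp add: tau_w_pair)
next
  case 3
  with assms show ?thesis by simp
qed

lemma tau_opt_commute: "tau_opt (x \<cdot> y) = tau_opt (y \<cdot> x)"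
proof -
  have "tau_opt (x \<cdot> y) = 1 \<Longrightarrow> tau_opt (y \<cdot> x) = 1" for x y
    by (cases x; cases y) (auto simp: tau_opt_eq_1_commute_pairs)
  then show ?thesis
    by (metis tau_opt_cases)
qed

lemma tau_opt_times_e_split:
  "tau_opt (r \<cdot> Some cu_e) = tau_opt (r \<cdot> Some ([G1], [G1])) + tau_opt (r \<cdot> Some ([G2], [G2]))"
proof (cases r)
  case (Some p)
  obtain a b where "p = (a, b)" by fastforce
  with Some show ?thesis
    by (cases b; cases "hd b") (auto simp: cu_mult_def cu_e_def tau_w_pair)
qed simp

lemma l1_iff_summable_norm: "f \<in> l1 \<longleftrightarrow> (\<lambda>x. norm (f x)) summable_on UNIV"
  by (simp add: l1_def)

lemma summable_on_norm_mult_bounded: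
  fixes f k :: "'a \<Rightarrow> 'b::real_normed_div_algebra"
  assumes "(\<lambda>x. norm (f x)) summable_on A" "\<And>x. norm (k x) \<le> B"
  shows "(\<lambda>x. norm (f x * k x)) summable_on A"
proof (rule summable_on_comparison_test)
  show "(\<lambda>x. B * norm (f x)) summable_on A"
    using assms(1) by (rule summable_on_cmult_right)
  show "norm (f x * k x) \<le> B * norm (f x)" for x
    using mult_left_mono[OF assms(2) norm_ge_zero] by (simp add: norm_mult mult.commute)
qed simp

lemma summable_on_norm_tensor:
  fixes f :: "'a \<Rightarrow> 'c::real_normed_div_algebra" and g :: "'b \<Rightarrow> 'c"
  assumes f: "(\<lambda>x. norm (f x)) summable_on UNIV" and g: "(\<lambda>y. norm (g y)) summable_on UNIV"
  shows "(\<lambda>p. norm (f (fst p) * g (snd p))) summable_on UNIV"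
proof -
  let ?h = "\<lambda>(x, y). f x * g y"
  have "(\<lambda>p. norm (?h p)) summable_on UNIV \<times> UNIV"
  proof (subst Infinite_Sum.abs_summable_on_Sigma_iff, intro conjI ballI)
    show "(\<lambda>y. norm (?h (x, y))) summable_on UNIV" for x
      using summable_on_cmult_right[OF g, of "norm (f x)"] by (simp add: norm_mult)
    show "(\<lambda>x. norm (\<Sum>\<^sub>\<infinity>y. norm (?h (x, y)))) summable_on UNIV"
      using summable_on_cmult_left[OF f, of "\<Sum>\<^sub>\<infinity>y. norm (g y)"]
      by (simp add: norm_mult infsum_cmult_right' infsum_nonneg abs_mult)
  qed
  then show ?thesis
    by (simp add: case_prod_unfold)
qed

lemma infsum_swap_pairs: "(\<Sum>\<^sub>\<infinity>(x, y). h x y) = (\<Sum>\<^sub>\<infinity>(y, x). h x y)"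
  by (rule infsum_reindex_bij_witness[of UNIV prod.swap prod.swap]) auto

lemma infsum_tensor_kernel:
  fixes f :: "'a \<Rightarrow> 'c::{banach, real_normed_field}" and g :: "'b \<Rightarrow> 'c"
  assumes f: "(\<lambda>x. norm (f x)) summable_on UNIV" and g: "(\<lambda>y. norm (g y)) summable_on UNIV"
    and K: "\<And>x y. norm (K x y) \<le> B"
  shows "(\<Sum>\<^sub>\<infinity>(x, y). f x * g y * K x y) = (\<Sum>\<^sub>\<infinity>x. f x * (\<Sum>\<^sub>\<infinity>y. g y * K x y))"
proof -
  have "(\<lambda>p. f (fst p) * g (snd p) * K (fst p) (snd p)) summable_on UNIV"
    by (rule abs_summable_summable, rule summable_on_norm_mult_bounded[OF summable_on_norm_tensor[OF f g]])
      (rule K)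
  then have "(\<Sum>\<^sub>\<infinity>(x, y). f x * g y * K x y) = (\<Sum>\<^sub>\<infinity>x. \<Sum>\<^sub>\<infinity>y. f x * g y * K x y)"
    using infsum_Sigma_banach[of "\<lambda>(x, y). f x * g y * K x y" UNIV "\<lambda>_. UNIV"]
    by (simp add: case_prod_unfold)
  also have "\<dots> = (\<Sum>\<^sub>\<infinity>x. f x * (\<Sum>\<^sub>\<infinity>y. g y * K x y))"
    by (simp add: mult.assoc infsum_cmult_right')
  finally show ?thesis .
qed

lemma summable_on_Sigma_fibers_iff:
  "(\<lambda>(w, x). h x) summable_on (SIGMA w:UNIV. {x. \<pi> x = Some w}) \<longleftrightarrow> h summable_on {x. \<pi> x \<noteq> None}"
  by (rule summable_on_reindex_bij_witness[of _ "\<lambda>x. (the (\<pi> x), x)" snd]) auto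

lemma infsum_Sigma_fibers:
  "(\<Sum>\<^sub>\<infinity>(w, x)\<in>(SIGMA w:UNIV. {x. \<pi> x = Some w}). h x) = (\<Sum>\<^sub>\<infinity>x\<in>{x. \<pi> x \<noteq> None}. h x)"
  by (rule infsum_reindex_bij_witness[of _ "\<lambda>x. (the (\<pi> x), x)" snd]) auto

lemma abs_summable_on_fibers:
  fixes h :: "'a \<Rightarrow> 'c::banach" and \<pi> :: "'a \<Rightarrow> 'b option"
  assumes h: "(\<lambda>x. norm (h x)) summable_on UNIV"
  shows "(\<lambda>w. norm (\<Sum>\<^sub>\<infinity>x\<in>{x. \<pi> x = Some w}. h x)) summable_on UNIV"
proof -
  have "(\<lambda>(w, x). norm (h x)) summable_on (SIGMA w:UNIV. {x. \<pi> x = Some w})"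
    using summable_on_subset_banach[OF h] by (simp add: summable_on_Sigma_fibers_iff)
  then have fibers: "\<And>w. (\<lambda>x. norm (h x)) summable_on {x. \<pi> x = Some w}"
    and sums: "(\<lambda>w. norm (\<Sum>\<^sub>\<infinity>x\<in>{x. \<pi> x = Some w}. norm (h x))) summable_on UNIV"
    using Infinite_Sum.abs_summable_on_Sigma_iff[of "\<lambda>(w, x). h x" UNIV "\<lambda>w. {x. \<pi> x = Some w}"]
    by (auto simp: case_prod_unfold)
  show ?thesis
  proof (rule summable_on_comparison_test[OF sums])
    show "norm (\<Sum>\<^sub>\<infinity>x\<in>{x. \<pi> x = Some w}. h x) \<le> norm (\<Sum>\<^sub>\<infinity>x\<in>{x. \<pi> x = Some w}. norm (h x))" for w
      using norm_infsum_bound[OF fibers] by (simp add: infsum_nonneg)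
  qed simp
qed

lemma infsum_fibers:
  fixes h :: "'a \<Rightarrow> 'c::banach" and \<pi> :: "'a \<Rightarrow> 'b option"
  assumes h: "(\<lambda>x. norm (h x)) summable_on UNIV" and vanish: "\<And>x. \<pi> x = None \<Longrightarrow> h x = 0"
  shows "(\<Sum>\<^sub>\<infinity>w. \<Sum>\<^sub>\<infinity>x\<in>{x. \<pi> x = Some w}. h x) = (\<Sum>\<^sub>\<infinity>x. h x)"
proof -
  have "h summable_on {x. \<pi> x \<noteq> None}"
    using abs_summable_summable[OF h] summable_on_subset_banach by blast
  then have "(\<lambda>(w, x). h x) summable_on (SIGMA w:UNIV. {x. \<pi> x = Some w})"
    by (simp add: summable_on_Sigma_fibers_iff)
  then have "(\<Sum>\<^sub>\<infinity>w. \<Sum>\<^sub>\<infinity>x\<in>{x. \<pi> x = Some w}. h x)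
      = (\<Sum>\<^sub>\<infinity>(w, x)\<in>(SIGMA w:UNIV. {x. \<pi> x = Some w}). h x)"
    using infsum_Sigma_banach by fastforce
  also have "\<dots> = (\<Sum>\<^sub>\<infinity>x\<in>{x. \<pi> x \<noteq> None}. h x)"
    by (rule infsum_Sigma_fibers)
  also have "\<dots> = (\<Sum>\<^sub>\<infinity>x. h x)"
    by (rule infsum_cong_neutral) (use vanish in auto)
  finally show ?thesis .
qed

lemma l1_add: "f \<in> l1 \<Longrightarrow> g \<in> l1 \<Longrightarrow> f + g \<in> l1"
  unfolding l1_iff_summable_norm
  by (rule summable_on_comparison_test[OF summable_on_add[of "\<lambda>w. norm (f w)" _ "\<lambda>w. norm (g w)"]])
    (auto intro: norm_triangle_ineq)

lemma l1_diff: "f \<in> l1 \<Longrightarrow> g \<in> l1 \<Longrightarrow> f - g \<in> l1"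
  unfolding l1_iff_summable_norm
  by (rule summable_on_comparison_test[OF summable_on_add[of "\<lambda>w. norm (f w)" _ "\<lambda>w. norm (g w)"]])
    (auto intro: norm_triangle_ineq4)

lemma l1_scale: "f \<in> l1 \<Longrightarrow> (\<lambda>w. c * f w) \<in> l1"
  unfolding l1_iff_summable_norm norm_mult by (rule summable_on_cmult_right)

lemma l1_delta: "delta s \<in> l1"
proof -
  have "(\<lambda>w. norm (delta s w)) summable_on {s}"
    by simp
  then show ?thesis
    unfolding l1_iff_summable_norm
    by (rule summable_on_cong_neutral[THEN iffD1, rotated -1]) (auto simp: delta_def)
qed

lemma f0_l1: "f0 \<in> l1"
  unfolding f0_def by (intro l1_diff l1_delta)

lemma conv_eq_infsum_fiber:
  "(f # g) w = (\<Sum>\<^sub>\<infinity>p\<in>{p. case_prod cu_mult p = Some w}. f (fst p) * g (snd p))"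
  by (simp add: conv_def case_prod_unfold)

lemma conv_l1:
  assumes "f \<in> l1" "g \<in> l1"
  shows "f # g \<in> l1"
proof -
  have "(\<lambda>w. norm (\<Sum>\<^sub>\<infinity>p\<in>{p. case_prod cu_mult p = Some w}. f (fst p) * g (snd p))) summable_on UNIV"
    using assms abs_summable_on_fibers[OF summable_on_norm_tensor, of f g "case_prod cu_mult"]
    by (simp add: l1_iff_summable_norm)
  then show ?thesis
    by (simp only: l1_iff_summable_norm conv_eq_infsum_fiber)
qed

lemma infsum_conv_mult_kernel:
  assumes f: "f \<in> l1" and g: "g \<in> l1" and k: "k None = 0" "\<And>x. norm (k x) \<le> B"
  shows "(\<Sum>\<^sub>\<infinity>w. (f # g) w * k (Some w)) = (\<Sum>\<^sub>\<infinity>(u, v). f u * g v * k (cu_mult u v))"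
proof -
  let ?F = "\<lambda>w. {p. case_prod cu_mult p = Some w}"
  let ?h = "\<lambda>p. f (fst p) * g (snd p) * k (case_prod cu_mult p)"
  have pointwise: "(f # g) w * k (Some w) = (\<Sum>\<^sub>\<infinity>p\<in>?F w. ?h p)" for w
  proof -
    have "(f # g) w * k (Some w) = (\<Sum>\<^sub>\<infinity>p\<in>?F w. f (fst p) * g (snd p) * k (Some w))"
      by (simp add: conv_eq_infsum_fiber infsum_cmult_left')
    also have "\<dots> = (\<Sum>\<^sub>\<infinity>p\<in>?F w. ?h p)"
      by (rule infsum_cong) simp
    finally show ?thesis .
  qed
  have "(\<Sum>\<^sub>\<infinity>w. (f # g) w * k (Some w)) = (\<Sum>\<^sub>\<infinity>w. \<Sum>\<^sub>\<infinity>p\<in>?F w. ?h p)"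
    by (rule infsum_cong) (rule pointwise)
  also have "\<dots> = (\<Sum>\<^sub>\<infinity>p. ?h p)"
  proof (rule infsum_fibers)
    show "(\<lambda>p. norm (?h p)) summable_on UNIV"
      using summable_on_norm_mult_bounded[OF summable_on_norm_tensor, of f g "\<lambda>p. k (case_prod cu_mult p)" B]
        f g k by (simp add: l1_iff_summable_norm)
  qed (simp add: k)
  also have "\<dots> = (\<Sum>\<^sub>\<infinity>(u, v). f u * g v * k (cu_mult u v))"
    by (simp add: case_prod_unfold)
  finally show ?thesis .
qed

text \<open>For \<open>r = Some x\<close> this is \<open>tau (delta x # f)\<close>; \<open>r = None\<close> stands for the zero element.\<close>

definition tau_left_mult :: "cu option \<Rightarrow> (cu \<Rightarrow> complex) \<Rightarrow> complex" where
  "tau_left_mult r f = (\<Sum>\<^sub>\<infinity>v. f v * tau_opt (r \<cdot> Some v))"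

lemma tau_eq_tau_left_mult_e: "tau f = tau_left_mult (Some cu_e) f"
  by (simp add: tau_def tau_left_mult_def)

lemma abs_summable_tau_left_mult:
  "f \<in> l1 \<Longrightarrow> (\<lambda>v. norm (f v * tau_opt (r \<cdot> Some v))) summable_on UNIV"
  by (rule summable_on_norm_mult_bounded[of _ _ _ 1]) (simp_all add: l1_iff_summable_norm norm_tau_opt_le)

lemma tau_left_mult_add:
  "f \<in> l1 \<Longrightarrow> g \<in> l1 \<Longrightarrow> tau_left_mult r (f + g) = tau_left_mult r f + tau_left_mult r g"
  by (simp add: tau_left_mult_def distrib_right infsum_add abs_summable_summable[OF abs_summable_tau_left_mult])

lemma tau_left_mult_scale: "tau_left_mult r (\<lambda>w. c * f w) = c * tau_left_mult r f"
  by (simp add: tau_left_mult_def mult.assoc infsum_cmult_right')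

lemma tau_left_mult_diff:
  assumes "f \<in> l1" "g \<in> l1"
  shows "tau_left_mult r (f - g) = tau_left_mult r f - tau_left_mult r g"
proof -
  have "tau_left_mult r (f - g) = tau_left_mult r (f + (\<lambda>w. (-1) * g w))"
    by (rule arg_cong[where f = "tau_left_mult r"]) auto
  also have "\<dots> = tau_left_mult r f - tau_left_mult r g"
    using assms by (simp only: tau_left_mult_add l1_scale tau_left_mult_scale) simp
  finally show ?thesis .
qed

lemma norm_tau_left_mult_le:
  assumes "f \<in> l1"
  shows "norm (tau_left_mult r f) \<le> l1norm f"
proof -
  have "norm (tau_left_mult r f) \<le> (\<Sum>\<^sub>\<infinity>v. norm (f v * tau_opt (r \<cdot> Some v)))"
    unfolding tau_left_mult_def by (rule norm_infsum_bound[OF abs_summable_tau_left_mult[OF assms]])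
  also have "\<dots> \<le> (\<Sum>\<^sub>\<infinity>v. norm (f v))"
    using assms unfolding l1_iff_summable_norm
    by (intro infsum_mono abs_summable_tau_left_mult[OF assms])
      (simp_all add: norm_mult mult_left_le norm_tau_opt_le)
  finally show ?thesis
    by (simp add: l1norm_def)
qed

lemma tau_left_mult_tendsto:
  assumes "\<And>n. F n \<in> l1" "f \<in> l1" "(\<lambda>n. l1norm (F n - f)) \<longlonglongrightarrow> 0"
  shows "(\<lambda>n. tau_left_mult r (F n)) \<longlonglongrightarrow> tau_left_mult r f"
proof -
  have "norm (tau_left_mult r (F n) - tau_left_mult r f) \<le> l1norm (F n - f)" for n
    using assms(1,2) by (metis tau_left_mult_diff norm_tau_left_mult_le l1_diff)
  then have "(\<lambda>n. tau_left_mult r (F n) - tau_left_mult r f) \<longlonglongrightarrow> 0"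
    by (intro Lim_null_comparison[OF _ assms(3)]) simp
  then show ?thesis
    by (rule LIM_zero_cancel)
qed

lemma tau_left_mult_delta: "tau_left_mult r (delta s) = tau_opt (r \<cdot> Some s)"
proof -
  have "tau_left_mult r (delta s) = (\<Sum>\<^sub>\<infinity>v\<in>{s}. delta s v * tau_opt (r \<cdot> Some v))"
    unfolding tau_left_mult_def by (rule infsum_cong_neutral) (auto simp: delta_def)
  then show ?thesis
    by (simp add: delta_def)
qed

lemma tau_left_mult_f0: "tau_left_mult r f0 = 0"
  unfolding f0_def using tau_opt_times_e_split[of r]
  by (simp add: tau_left_mult_diff l1_diff l1_delta tau_left_mult_delta)

lemma tau_left_mult_conv_eq_infsum_pairs:
  assumes "f \<in> l1" "g \<in> l1"
  shows "tau_left_mult r (f # g) = (\<Sum>\<^sub>\<infinity>(u, v). f u * g v * tau_opt (r \<cdot> (Some u \<cdot> Some v)))"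
  using infsum_conv_mult_kernel[OF assms, of "\<lambda>q. tau_opt (r \<cdot> q)" 1]
  by (simp add: tau_left_mult_def norm_tau_opt_le)

lemma tau_left_mult_conv_left:
  assumes f: "f \<in> l1" and g: "g \<in> l1"
  shows "tau_left_mult r (f # g) = (\<Sum>\<^sub>\<infinity>u. f u * tau_left_mult (r \<cdot> Some u) g)"
proof -
  have "tau_left_mult r (f # g) = (\<Sum>\<^sub>\<infinity>(u, v). f u * g v * tau_opt ((r \<cdot> Some u) \<cdot> Some v))"
    by (simp only: tau_left_mult_conv_eq_infsum_pairs[OF f g] cu_times_assoc)
  also have "\<dots> = (\<Sum>\<^sub>\<infinity>u. f u * tau_left_mult (r \<cdot> Some u) g)"
    using f g unfolding tau_left_mult_def l1_iff_summable_norm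
    by (rule infsum_tensor_kernel) (rule norm_tau_opt_le)
  finally show ?thesis .
qed

lemma tau_left_mult_conv_right:
  assumes f: "f \<in> l1" and g: "g \<in> l1"
  shows "tau_left_mult r (f # g) = (\<Sum>\<^sub>\<infinity>v. g v * tau_left_mult (Some v \<cdot> r) f)"
proof -
  have cyclic: "tau_opt (r \<cdot> (Some u \<cdot> Some v)) = tau_opt ((Some v \<cdot> r) \<cdot> Some u)" for u v
    by (metis cu_times_assoc tau_opt_commute)
  have "tau_left_mult r (f # g) = (\<Sum>\<^sub>\<infinity>(u, v). f u * g v * tau_opt ((Some v \<cdot> r) \<cdot> Some u))"
    by (simp only: tau_left_mult_conv_eq_infsum_pairs[OF f g] cyclic)
  also have "\<dots> = (\<Sum>\<^sub>\<infinity>(v, u). g v * f u * tau_opt ((Some v \<cdot> r) \<cdot> Some u))"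
    by (subst infsum_swap_pairs) (simp add: mult.commute)
  also have "\<dots> = (\<Sum>\<^sub>\<infinity>v. g v * tau_left_mult (Some v \<cdot> r) f)"
    using g f unfolding tau_left_mult_def l1_iff_summable_norm
    by (rule infsum_tensor_kernel) (rule norm_tau_opt_le)
  finally show ?thesis .
qed

definition tau_kernel_ideal :: "(cu \<Rightarrow> complex) set" where
  "tau_kernel_ideal = {f \<in> l1. \<forall>r. tau_left_mult r f = 0}"

lemma closed_ideal_tau_kernel_ideal: "closed_ideal tau_kernel_ideal"
  unfolding closed_ideal_def
proof (intro conjI ballI allI impI)
  show "tau_kernel_ideal \<subseteq> l1"
    by (auto simp: tau_kernel_ideal_def)
  show "0 \<in> tau_kernel_ideal"
    by (simp add: tau_kernel_ideal_def tau_left_mult_def l1_def)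
  show "f + g \<in> tau_kernel_ideal" if "f \<in> tau_kernel_ideal" "g \<in> tau_kernel_ideal" for f g
    using that by (simp add: tau_kernel_ideal_def tau_left_mult_add l1_add)
  show "(\<lambda>w. c * f w) \<in> tau_kernel_ideal" if "f \<in> tau_kernel_ideal" for c f
    using that by (simp add: tau_kernel_ideal_def tau_left_mult_scale l1_scale)
  show "a # f \<in> tau_kernel_ideal" if "a \<in> l1" "f \<in> tau_kernel_ideal" for a f
    using that by (simp add: tau_kernel_ideal_def conv_l1 tau_left_mult_conv_left)
  show "f # a \<in> tau_kernel_ideal" if "a \<in> l1" "f \<in> tau_kernel_ideal" for a f
    using that by (simp add: tau_kernel_ideal_def conv_l1 tau_left_mult_conv_right)
  show "f \<in> tau_kernel_ideal"
    if "(\<forall>n. F n \<in> tau_kernel_ideal) \<and> f \<in> l1 \<and> (\<lambda>n. l1norm (F n - f)) \<longlonglongrightarrow> 0" for F f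
  proof -
    have "tau_left_mult r f = 0" for r
    proof -
      have "(\<lambda>n. tau_left_mult r (F n)) \<longlonglongrightarrow> tau_left_mult r f"
        using that by (intro tau_left_mult_tendsto) (auto simp: tau_kernel_ideal_def)
      moreover have "(\<lambda>n. tau_left_mult r (F n)) = (\<lambda>n. 0)"
        using that by (simp add: tau_kernel_ideal_def)
      ultimately show ?thesis
        by (simp add: LIMSEQ_const_iff)
    qed
    with that show ?thesis
      by (simp add: tau_kernel_ideal_def)
  qed
qed

lemma J_subset_tau_kernel_ideal: "J \<subseteq> tau_kernel_ideal"
  unfolding J_def using closed_ideal_tau_kernel_ideal f0_l1 tau_left_mult_f0
  by (auto simp: tau_kernel_ideal_def)

lemma zero_in_J: "0 \<in> J"
  unfolding J_def closed_ideal_def by blast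

lemma J_subset_l1: "J \<subseteq> l1"
  using J_subset_tau_kernel_ideal by (auto simp: tau_kernel_ideal_def)

lemma tau_J_eq_0: "j \<in> J \<Longrightarrow> tau j = 0"
  using J_subset_tau_kernel_ideal by (auto simp: tau_kernel_ideal_def tau_eq_tau_left_mult_e)

lemma tau_diff: "f \<in> l1 \<Longrightarrow> g \<in> l1 \<Longrightarrow> tau (f - g) = tau f - tau g"
  by (simp add: tau_eq_tau_left_mult_e tau_left_mult_diff)

lemma norm_tau_le: "f \<in> l1 \<Longrightarrow> norm (tau f) \<le> l1norm f"
  by (simp add: tau_eq_tau_left_mult_e norm_tau_left_mult_le)

lemma norm_tau_le_quotient_norm:
  assumes f: "f \<in> l1"
  shows "norm (tau f) \<le> (INF j\<in>J. l1norm (f - j))"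
proof (rule cINF_greatest)
  show "J \<noteq> {}"
    using zero_in_J by blast
  show "norm (tau f) \<le> l1norm (f - j)" if j: "j \<in> J" for j
  proof -
    have "j \<in> l1"
      using j J_subset_l1 by blast
    then have "tau f = tau (f - j)"
      using tau_diff[OF f] tau_J_eq_0[OF j] by simp
    then show ?thesis
      using norm_tau_le[OF l1_diff[OF f \<open>j \<in> l1\<close>]] by simp
  qed
qed

lemma tau_conv_commute:
  assumes "f \<in> l1" "g \<in> l1"
  shows "tau (f # g) = tau (g # f)"
proof -
  have "tau (f # g) = (\<Sum>\<^sub>\<infinity>u. f u * tau_left_mult (Some u) g)"
    using assms by (simp add: tau_eq_tau_left_mult_e tau_left_mult_conv_left)
  also have "\<dots> = tau (g # f)"
    using assms by (simp add: tau_eq_tau_left_mult_e tau_left_mult_conv_right)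
  finally show ?thesis .
qed

lemma tau_delta_s1: "tau (delta ([G1], [])) = 1"
  by (simp add: tau_eq_tau_left_mult_e tau_left_mult_delta tau_w_pair)

lemma tau_delta_e: "tau (delta cu_e) = 0"
  by (simp add: tau_eq_tau_left_mult_e tau_left_mult_delta tau_w_pair cu_e_def cu_mult_def)

theorem theorem4p3:
  shows "(\<exists>f\<in>l1. tau f \<noteq> 0)
    \<and> (\<exists>C. \<forall>f\<in>l1. norm (tau f) \<le> C * l1norm f)
    \<and> (\<forall>f\<in>l1. \<forall>g\<in>l1. tau (f # g) = tau (g # f))
    \<and> tau (delta cu_e) = 0
    \<and> (\<forall>j\<in>J. tau j = 0)
    \<and> (\<forall>f\<in>l1. \<forall>g\<in>l1. f - g \<in> J \<longrightarrow> tau f = tau g)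
    \<and> (\<exists>C. \<forall>f\<in>l1. norm (tau f) \<le> C * (INF j\<in>J. l1norm (f - j)))
    \<and> (\<exists>f\<in>l1. f \<notin> J \<and> tau f \<noteq> 0)"
proof (intro conjI)
  show "\<exists>f\<in>l1. tau f \<noteq> 0" "\<exists>f\<in>l1. f \<notin> J \<and> tau f \<noteq> 0"
    using l1_delta tau_delta_s1 tau_J_eq_0 by (metis zero_neq_one)+
  show "\<exists>C. \<forall>f\<in>l1. norm (tau f) \<le> C * l1norm f"
    using norm_tau_le by (intro exI[of _ 1]) simp
  show "\<exists>C. \<forall>f\<in>l1. norm (tau f) \<le> C * (INF j\<in>J. l1norm (f - j))"
    using norm_tau_le_quotient_norm by (intro exI[of _ 1]) simp
  show "\<forall>f\<in>l1. \<forall>g\<in>l1. f - g \<in> J \<longrightarrow> tau f = tau g"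
    using tau_diff tau_J_eq_0 by fastforce
qed (use tau_conv_commute tau_delta_e tau_J_eq_0 in auto)

end
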